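(* Let $\lambda\vdash n$ with ${\rm aft}(\lambda)=k$. Then $f^\lambda\leq n^k/\sqrt{k!}$ and $f^\lambda\geq \binom{n-k}{k}$.
   Context: For $\lambda\vdash n$, ${\rm aft}(\lambda):=n-\max\{\lambda_1,\ell(\lambda)\}$, where $\ell(\lambda)$ is the number of nonzero parts. $f^\lambda$ denotes the number of standard Young tableaux of shape $\lambda$. *)

theory Defs
  imports Complex_Main
begin

text \<open>A partition of n: a weakly decreasing list of positive parts summing to n.
  Parts are indexed from 0: lambda_1 is lam!0.\<close>
definition is_partition :: "nat list \<Rightarrow> nat \<Rightarrow> bool" where
  "is_partition lam n \<longleftrightarrow> sorted (rev lam) \<and> (\<forall>x\<in>set lam. 0 < x) \<and> sum_list lam = n"

definition first_part :: "nat list \<Rightarrow> nat" where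
  "first_part lam = (if lam = [] then 0 else hd lam)"

definition aft :: "nat list \<Rightarrow> nat" where
  "aft lam = sum_list lam - max (first_part lam) (length lam)"

definition young_diagram :: "nat list \<Rightarrow> (nat \<times> nat) set" where
  "young_diagram lam = {(i, j). i < length lam \<and> j < lam ! i}"

definition is_SYT :: "nat list \<Rightarrow> (nat \<times> nat \<Rightarrow> nat) \<Rightarrow> bool" where
  "is_SYT lam T \<longleftrightarrow>
     bij_betw T (young_diagram lam) {1..sum_list lam} \<and>
     (\<forall>i j. (i, j) \<in> young_diagram lam \<and> (i, Suc j) \<in> young_diagram lam \<longrightarrow> T (i, j) < T (i, Suc j)) \<and>
     (\<forall>i j. (i, j) \<in> young_diagram lam \<and> (Suc i, j) \<in> young_diagram lam \<longrightarrow> T (i, j) < T (Suc i, j)) \<and>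
     (\<forall>c. c \<notin> young_diagram lam \<longrightarrow> T c = 0)"

text \<open>f^lambda: the number of standard Young tableaux of shape lambda
  (tableaux are normalized to 0 outside the diagram so they are counted once).\<close>
definition num_SYT :: "nat list \<Rightarrow> nat" where
  "num_SYT lam = card {T. is_SYT lam T}"

end

theory Submission
  imports Defs
begin

(* Count the standard tableaux f D of a finite down-closed set of cells D by the branching rule:
  the entry |D| occupies a removable cell.  Expanding both sides of
    (sum over addable cells c of f (D + c)) = (|D| + 1) f D
  with this rule, the cross terms agree, so the identity follows by induction; summing
  f D * f (D - d) over pairs then shows that the squares f D ^ 2 over all diagrams of size k sum to k!.
  After transposing if necessary, the first row is the longer of first row and first column, so
  the diagram mu D (lower_rows D) below the first row has k = aft cells and the first row has n - k.  A removable
  cell either ends the first row or is removable in mu D, so induction over the branching rule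
  gives f D <= C(n,k) f (mu D) <= C(n,k) sqrt(k!) <= n^k / sqrt(k!), and keeping one term of
  each kind gives f D >= C(n-k, k) by Pascal's rule. *)

definition diagram :: "(nat \<times> nat) set \<Rightarrow> bool" where
  "diagram D \<longleftrightarrow> finite D \<and> (\<forall>i j. (Suc i, j) \<in> D \<longrightarrow> (i, j) \<in> D) \<and>
     (\<forall>i j. (i, Suc j) \<in> D \<longrightarrow> (i, j) \<in> D)"

definition syt :: "(nat \<times> nat) set \<Rightarrow> (nat \<times> nat \<Rightarrow> nat) \<Rightarrow> bool" where
  "syt D T \<longleftrightarrow> bij_betw T D {1..card D} \<and>
     (\<forall>i j. (i, j) \<in> D \<and> (i, Suc j) \<in> D \<longrightarrow> T (i, j) < T (i, Suc j)) \<and>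
     (\<forall>i j. (i, j) \<in> D \<and> (Suc i, j) \<in> D \<longrightarrow> T (i, j) < T (Suc i, j)) \<and>
     (\<forall>c. c \<notin> D \<longrightarrow> T c = 0)"

definition syt_count :: "(nat \<times> nat) set \<Rightarrow> nat" where
  "syt_count D = card {T. syt D T}"

definition below :: "nat \<times> nat \<Rightarrow> nat \<times> nat" where
  "below c = (Suc (fst c), snd c)"

definition successors :: "nat \<times> nat \<Rightarrow> (nat \<times> nat) set" where
  "successors c = {(fst c, Suc (snd c)), below c}"

definition removable :: "(nat \<times> nat) set \<Rightarrow> nat \<times> nat \<Rightarrow> bool" where
  "removable D c \<longleftrightarrow> c \<in> D \<and> (fst c, Suc (snd c)) \<notin> D \<and> below c \<notin> D"

definition addable :: "(nat \<times> nat) set \<Rightarrow> nat \<times> nat \<Rightarrow> bool" where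
  "addable D c \<longleftrightarrow> c \<notin> D \<and> (\<forall>i j. c = (Suc i, j) \<longrightarrow> (i, j) \<in> D) \<and>
     (\<forall>i j. c = (i, Suc j) \<longrightarrow> (i, j) \<in> D)"

definition removables :: "(nat \<times> nat) set \<Rightarrow> (nat \<times> nat) set" where
  "removables D = {c. removable D c}"

definition addables :: "(nat \<times> nat) set \<Rightarrow> (nat \<times> nat) set" where
  "addables D = {c. addable D c}"

definition row_length :: "(nat \<times> nat) set \<Rightarrow> nat \<Rightarrow> nat" where
  "row_length D i = card {j. (i, j) \<in> D}"

definition lower_rows :: "(nat \<times> nat) set \<Rightarrow> (nat \<times> nat) set" where
  "lower_rows D = below -` D"

definition diagrams_of_size :: "nat \<Rightarrow> (nat \<times> nat) set set" where
  "diagrams_of_size k = {D. diagram D \<and> card D = k}"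

section \<open>Diagrams\<close>

lemma diagram_finite: "diagram D \<Longrightarrow> finite D"
  unfolding diagram_def by blast

lemma diagram_up: "diagram D \<Longrightarrow> (Suc i, j) \<in> D \<Longrightarrow> (i, j) \<in> D"
  unfolding diagram_def by blast

lemma diagram_left: "diagram D \<Longrightarrow> (i, Suc j) \<in> D \<Longrightarrow> (i, j) \<in> D"
  unfolding diagram_def by blast

lemma diagramI:
  "finite D \<Longrightarrow> (\<And>i j. (Suc i, j) \<in> D \<Longrightarrow> (i, j) \<in> D) \<Longrightarrow>
    (\<And>i j. (i, Suc j) \<in> D \<Longrightarrow> (i, j) \<in> D) \<Longrightarrow> diagram D"
  unfolding diagram_def by blast

lemma diagram_empty: "diagram {}"
  by (rule diagramI) auto

lemma diagram_down_closed:
  assumes "diagram D" "(i, j) \<in> D" "i' \<le> i" "j' \<le> j"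
  shows "(i', j') \<in> D"
proof -
  have "(i', j) \<in> D"
    using assms(2,3) by (induction i arbitrary: i') (auto dest: diagram_up[OF assms(1)] simp: le_Suc_eq)
  then show ?thesis
    using assms(4) by (induction j arbitrary: j') (auto dest: diagram_left[OF assms(1)] simp: le_Suc_eq)
qed

lemma diagram_cell_bound:
  assumes "diagram D" "(i, j) \<in> D"
  shows "i < card D \<and> j < card D"
proof -
  have "(\<lambda>i'. (i', 0)) ` {..i} \<subseteq> D" "(\<lambda>j'. (i, j')) ` {..j} \<subseteq> D"
    using diagram_down_closed[OF assms] by auto
  moreover have "card ((\<lambda>i'. (i', 0::nat)) ` {..i}) = Suc i" "card ((\<lambda>j'. (i, j')) ` {..j}) = Suc j"
    by (simp_all add: card_image inj_on_def)
  ultimately show ?thesis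
    using card_mono[OF diagram_finite[OF assms(1)]] by (metis Suc_le_eq)
qed

lemma finite_diagrams_of_size: "finite (diagrams_of_size k)"
proof (rule finite_subset)
  show "diagrams_of_size k \<subseteq> Pow ({..<k} \<times> {..<k})"
    unfolding diagrams_of_size_def using diagram_cell_bound by fastforce
qed simp

lemma diagrams_of_size_0: "diagrams_of_size 0 = {{}}"
  unfolding diagrams_of_size_def using diagram_empty diagram_finite by auto

lemma down_closed_nat_set_eq_lessThan:
  fixes S :: "nat set"
  assumes "finite S" "\<And>x y. x \<in> S \<Longrightarrow> y \<le> x \<Longrightarrow> y \<in> S"
  shows "S = {..<card S}"
proof (cases "S = {}")
  case False
  then have "S = {..Max S}"
    using assms by (auto intro: Max_in)
  then show ?thesis
    by (metis card_atMost lessThan_Suc_atMost)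
qed simp

lemma row_eq_lessThan:
  assumes "diagram D"
  shows "{j. (i, j) \<in> D} = {..<row_length D i}"
proof -
  have "finite {j. (i, j) \<in> D}"
    using finite_imageI[OF diagram_finite[OF assms], of snd] by (rule finite_subset[rotated]) force
  moreover have "y \<in> {j. (i, j) \<in> D}" if "x \<in> {j. (i, j) \<in> D}" "y \<le> x" for x y
    using that diagram_down_closed[OF assms] by auto
  ultimately show ?thesis
    unfolding row_length_def by (rule down_closed_nat_set_eq_lessThan)
qed

lemma mem_iff_row_length: "diagram D \<Longrightarrow> (i, j) \<in> D \<longleftrightarrow> j < row_length D i"
  using row_eq_lessThan[of D i] by blast

lemma removables_eq:
  assumes "diagram D"
  shows "removables D = (\<lambda>i. (i, row_length D i - 1)) ` {i. row_length D (Suc i) < row_length D i}"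
proof -
  have "removable D (i, j) \<longleftrightarrow> j = row_length D i - 1 \<and> row_length D (Suc i) < row_length D i" for i j
    unfolding removable_def below_def using mem_iff_row_length[OF assms] by auto
  then show ?thesis
    unfolding removables_def by auto
qed

lemma addables_eq:
  assumes "diagram D"
  shows "addables D =
    (\<lambda>i. (i, row_length D i)) ` insert 0 (Suc ` {i. row_length D (Suc i) < row_length D i})"
proof -
  have "addable D (i, j) \<longleftrightarrow>
      j = row_length D i \<and> (i = 0 \<or> (\<exists>i'. i = Suc i' \<and> row_length D (Suc i') < row_length D i'))"
    for i j
    unfolding addable_def using mem_iff_row_length[OF assms] by (cases i; cases j) auto
  then show ?thesis
    unfolding addables_def by auto
qed

lemma finite_row_descents:
  assumes "diagram D"
  shows "finite {i. row_length D (Suc i) < row_length D i}"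
proof (rule finite_subset)
  show "{i. row_length D (Suc i) < row_length D i} \<subseteq> fst ` D"
    using mem_iff_row_length[OF assms] by force
qed (use diagram_finite[OF assms] in simp)

lemma finite_removables: "diagram D \<Longrightarrow> finite (removables D)"
  using finite_row_descents by (simp add: removables_eq)

lemma finite_addables: "diagram D \<Longrightarrow> finite (addables D)"
  using finite_row_descents by (simp add: addables_eq)

lemma card_addables:
  assumes "diagram D"
  shows "card (addables D) = card (removables D) + 1"
proof -
  let ?R = "{i. row_length D (Suc i) < row_length D i}"
  have "card (addables D) = card (insert 0 (Suc ` ?R))"
    unfolding addables_eq[OF assms] by (rule card_image) (simp add: inj_on_def)
  also have "\<dots> = card ?R + 1"
    using finite_row_descents[OF assms] by (simp add: card_image)
  also have "card ?R = card (removables D)"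
    unfolding removables_eq[OF assms] by (rule card_image[symmetric]) (simp add: inj_on_def)
  finally show ?thesis .
qed

lemma diagram_remove:
  assumes "diagram D" "removable D c"
  shows "diagram (D - {c})"
proof (rule diagramI)
  show "finite (D - {c})"
    using diagram_finite[OF assms(1)] by simp
  show "(Suc i, j) \<in> D - {c} \<Longrightarrow> (i, j) \<in> D - {c}" for i j
    using assms(2) unfolding removable_def below_def by (auto dest: diagram_up[OF assms(1)])
  show "(i, Suc j) \<in> D - {c} \<Longrightarrow> (i, j) \<in> D - {c}" for i j
    using assms(2) unfolding removable_def by (auto dest: diagram_left[OF assms(1)])
qed

lemma diagram_insert:
  assumes "diagram D" "addable D c"
  shows "diagram (insert c D)"
proof (rule diagramI)
  show "finite (insert c D)"
    using diagram_finite[OF assms(1)] by simp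
  show "(Suc i, j) \<in> insert c D \<Longrightarrow> (i, j) \<in> insert c D" for i j
    using assms(2) unfolding addable_def by (auto dest: diagram_up[OF assms(1)])
  show "(i, Suc j) \<in> insert c D \<Longrightarrow> (i, j) \<in> insert c D" for i j
    using assms(2) unfolding addable_def by (auto dest: diagram_left[OF assms(1)])
qed

lemma removable_in: "removable D c \<Longrightarrow> c \<in> D"
  unfolding removable_def by simp

lemma addable_notin: "addable D c \<Longrightarrow> c \<notin> D"
  unfolding addable_def by simp

lemma exists_removable:
  assumes "finite D" "D \<noteq> {}"
  shows "\<exists>c. removable D c"
proof -
  define M where "M = Max ((\<lambda>c. fst c + snd c) ` D)"
  have "M \<in> (\<lambda>c. fst c + snd c) ` D"
    using assms unfolding M_def by simp
  then obtain c where "c \<in> D" "fst c + snd c = M"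
    by auto
  moreover have "fst d + snd d \<le> M" if "d \<in> D" for d
    unfolding M_def using assms that by simp
  ultimately have "removable D c"
    unfolding removable_def below_def by force
  then show ?thesis ..
qed

lemma removable_insert_addable:
  assumes "diagram D" "addable D c"
  shows "removable (insert c D) c"
proof -
  obtain a b where c: "c = (a, b)" by fastforce
  have "(a, Suc b) \<notin> D" "(Suc a, b) \<notin> D"
    using addable_notin[OF assms(2)] diagram_up[OF assms(1)] diagram_left[OF assms(1)] c by blast+
  then show ?thesis
    unfolding removable_def below_def c by simp
qed

lemma addable_remove_removable:
  assumes "diagram D" "removable D d"
  shows "addable (D - {d}) d"
  using removable_in[OF assms(2)] unfolding addable_def
  by (auto dest: diagram_up[OF assms(1)] diagram_left[OF assms(1)])

lemma removables_insert:
  assumes "diagram D" "addable D c"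
  shows "removables (insert c D) = insert c {d \<in> removables D. c \<notin> successors d}"
  using removable_insert_addable[OF assms] addable_notin[OF assms(2)]
  unfolding removables_def removable_def successors_def by auto

lemma addables_remove:
  assumes "diagram D" "removable D d"
  shows "addables (D - {d}) = insert d {c \<in> addables D. c \<notin> successors d}"
proof -
  have iff: "addable (D - {d}) c \<longleftrightarrow> addable D c \<and> c \<notin> successors d" if "c \<noteq> d" for c
  proof -
    obtain a b x y where "c = (a, b)" "d = (x, y)" by fastforce
    then show ?thesis
      using that unfolding addable_def successors_def below_def by (cases a; cases b) auto
  qed
  show ?thesis
  proof (rule set_eqI)
    fix c
    show "c \<in> addables (D - {d}) \<longleftrightarrow> c \<in> insert d {c \<in> addables D. c \<notin> successors d}"
      using addable_remove_removable[OF assms] iff[of c] unfolding addables_def by (cases "c = d") auto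
  qed
qed

lemma row_length_remove:
  assumes "diagram D" "removable D c"
  shows "row_length (D - {c}) i = (if i = fst c then row_length D i - 1 else row_length D i)"
proof -
  obtain a b where c: "c = (a, b)" by fastforce
  have "finite {j. (i, j) \<in> D}"
    using row_eq_lessThan[OF assms(1), of i] by simp
  moreover have "(a, b) \<in> D"
    using removable_in[OF assms(2)] c by simp
  moreover have "{j. (i, j) \<in> D - {c}} = (if i = a then {j. (i, j) \<in> D} - {b} else {j. (i, j) \<in> D})"
    using c by auto
  ultimately show ?thesis
    unfolding row_length_def using c by simp
qed

section \<open>Counting standard tableaux\<close>

lemma syt_bij: "syt D T \<Longrightarrow> bij_betw T D {1..card D}"
  unfolding syt_def by blast

lemma syt_row: "syt D T \<Longrightarrow> (i, j) \<in> D \<Longrightarrow> (i, Suc j) \<in> D \<Longrightarrow> T (i, j) < T (i, Suc j)"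
  unfolding syt_def by blast

lemma syt_col: "syt D T \<Longrightarrow> (i, j) \<in> D \<Longrightarrow> (Suc i, j) \<in> D \<Longrightarrow> T (i, j) < T (Suc i, j)"
  unfolding syt_def by blast

lemma syt_outside: "syt D T \<Longrightarrow> c \<notin> D \<Longrightarrow> T c = 0"
  unfolding syt_def by blast

lemma sytI:
  "bij_betw T D {1..card D} \<Longrightarrow>
    (\<And>i j. (i, j) \<in> D \<Longrightarrow> (i, Suc j) \<in> D \<Longrightarrow> T (i, j) < T (i, Suc j)) \<Longrightarrow>
    (\<And>i j. (i, j) \<in> D \<Longrightarrow> (Suc i, j) \<in> D \<Longrightarrow> T (i, j) < T (Suc i, j)) \<Longrightarrow>
    (\<And>c. c \<notin> D \<Longrightarrow> T c = 0) \<Longrightarrow> syt D T"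
  unfolding syt_def by blast

lemma finite_syt: "finite D \<Longrightarrow> finite {T. syt D T}"
  using finite_set_of_finite_funs[of D "{1..card D}" 0]
  by (rule finite_subset[rotated]) (auto simp: syt_def bij_betw_def)

lemma syt_count_empty: "syt_count {} = 1"
proof -
  have "{T. syt {} T} = {\<lambda>_. 0}"
    unfolding syt_def by (auto simp: bij_betw_def)
  then show ?thesis
    unfolding syt_count_def by simp
qed

lemma syt_le_card: "syt D T \<Longrightarrow> d \<in> D \<Longrightarrow> T d \<le> card D"
  using syt_bij unfolding bij_betw_def by fastforce

lemma syt_max_removable:
  assumes "syt D T" "c \<in> D" "T c = card D"
  shows "removable D c"
  using assms syt_le_card[OF assms(1)] syt_row[OF assms(1)] syt_col[OF assms(1)]
  unfolding removable_def below_def by (cases c) fastforce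

lemma syt_remove_max:
  assumes "syt D T" "removable D c" "T c = card D"
  shows "syt (D - {c}) (T(c := 0))"
proof -
  have "c \<in> D" "finite D"
    using removable_in[OF assms(2)] bij_betw_finite[OF syt_bij[OF assms(1)]] by auto
  then have "{card D} \<subseteq> {1..card D}"
    by (auto simp: Suc_le_eq card_gt_0_iff)
  then have "bij_betw T (D - {c}) ({1..card D} - {card D})"
    using bij_betw_DiffI[OF syt_bij[OF assms(1)], of "{c}" "{card D}"] assms(3) \<open>c \<in> D\<close> by auto
  also have "{1..card D} - {card D} = {1..card (D - {c})}"
    using \<open>c \<in> D\<close> \<open>finite D\<close> by auto
  finally have "bij_betw (T(c := 0)) (D - {c}) {1..card (D - {c})}"
    by (rule bij_betw_cong[THEN iffD1, rotated]) simp
  then show ?thesis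
    using assms(1) unfolding syt_def by auto
qed

lemma syt_extend_max:
  assumes "syt (D - {c}) T" "removable D c" "finite D"
  shows "syt D (T(c := card D))"
proof (rule sytI)
  have "c \<in> D"
    using removable_in[OF assms(2)] .
  then have card_remove: "card (D - {c}) = card D - 1" and "card D \<ge> 1"
    using assms(3) by (auto simp: Suc_le_eq card_gt_0_iff)
  have smaller: "T d < card D" if "d \<in> D - {c}" for d
    using syt_le_card[OF assms(1) that] card_remove \<open>card D \<ge> 1\<close> by linarith
  have "bij_betw (T(c := card D)) (D - {c}) {1..card D - 1}"
    using syt_bij[OF assms(1)] card_remove by (subst bij_betw_cong[of _ _ T]) simp_all
  then have "bij_betw (T(c := card D)) (D - {c} \<union> {c}) ({1..card D - 1} \<union> {card D})"
    by (rule bij_betw_combine) auto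
  moreover have "D - {c} \<union> {c} = D" "{1..card D - 1} \<union> {card D} = {1..card D}"
    using \<open>c \<in> D\<close> \<open>card D \<ge> 1\<close> by auto
  ultimately show "bij_betw (T(c := card D)) D {1..card D}"
    by simp
  show "(T(c := card D)) (i, j) < (T(c := card D)) (i, Suc j)" if "(i, j) \<in> D" "(i, Suc j) \<in> D" for i j
  proof -
    have "(i, j) \<noteq> c"
      using that assms(2) unfolding removable_def by auto
    then show ?thesis
      using smaller syt_row[OF assms(1)] that by (cases "(i, Suc j) = c") auto
  qed
  show "(T(c := card D)) (i, j) < (T(c := card D)) (Suc i, j)" if "(i, j) \<in> D" "(Suc i, j) \<in> D" for i j
  proof -
    have "(i, j) \<noteq> c"
      using that assms(2) unfolding removable_def below_def by auto
    then show ?thesis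
      using smaller syt_col[OF assms(1)] that by (cases "(Suc i, j) = c") auto
  qed
  show "(T(c := card D)) d = 0" if "d \<notin> D" for d
    using that \<open>c \<in> D\<close> syt_outside[OF assms(1)] by auto
qed

lemma card_syt_max_at:
  assumes "diagram D" "removable D c"
  shows "card {T. syt D T \<and> T c = card D} = syt_count (D - {c})"
  unfolding syt_count_def
proof (rule bij_betw_same_card[of "\<lambda>T. T(c := 0)"], rule bij_betw_byWitness[where f' = "\<lambda>T. T(c := card D)"])
  show "\<forall>T\<in>{T. syt D T \<and> T c = card D}. (T(c := 0))(c := card D) = T"
    by auto
  show "\<forall>T\<in>{T. syt (D - {c}) T}. (T(c := card D))(c := 0) = T"
    using syt_outside[of "D - {c}" _ c] by auto
  show "(\<lambda>T. T(c := 0)) ` {T. syt D T \<and> T c = card D} \<subseteq> {T. syt (D - {c}) T}"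
    using syt_remove_max[OF _ assms(2)] by blast
  show "(\<lambda>T. T(c := card D)) ` {T. syt (D - {c}) T} \<subseteq> {T. syt D T \<and> T c = card D}"
    using syt_extend_max[OF _ assms(2) diagram_finite[OF assms(1)]] by auto
qed

theorem syt_count_branching:
  assumes "diagram D" "D \<noteq> {}"
  shows "syt_count D = (\<Sum>c\<in>removables D. syt_count (D - {c}))"
proof -
  have "finite D"
    using diagram_finite[OF assms(1)] .
  have "{T. syt D T} = (\<Union>c\<in>removables D. {T. syt D T \<and> T c = card D})"
  proof (intro equalityI subsetI)
    fix T assume "T \<in> {T. syt D T}"
    then have "syt D T" by simp
    have "card D \<in> {1..card D}"
      using \<open>finite D\<close> assms(2) by (simp add: Suc_leI card_gt_0_iff)
    then obtain c where "c \<in> D" "T c = card D"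
      using bij_betw_imp_surj_on[OF syt_bij[OF \<open>syt D T\<close>]] by (metis imageE)
    then show "T \<in> (\<Union>c\<in>removables D. {T. syt D T \<and> T c = card D})"
      using syt_max_removable[OF \<open>syt D T\<close>] \<open>syt D T\<close> unfolding removables_def by blast
  qed auto
  then have "syt_count D = card (\<Union>c\<in>removables D. {T. syt D T \<and> T c = card D})"
    unfolding syt_count_def by simp
  also have "\<dots> = (\<Sum>c\<in>removables D. card {T. syt D T \<and> T c = card D})"
  proof (rule card_UN_disjoint[OF finite_removables[OF assms(1)]])
    show "\<forall>c\<in>removables D. finite {T. syt D T \<and> T c = card D}"
      using finite_syt[OF \<open>finite D\<close>] by auto
    show "\<forall>c\<in>removables D. \<forall>d\<in>removables D. c \<noteq> d \<longrightarrow>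
        {T. syt D T \<and> T c = card D} \<inter> {T. syt D T \<and> T d = card D} = {}"
      using syt_bij unfolding removables_def removable_def bij_betw_def inj_on_def by fastforce
  qed
  also have "\<dots> = (\<Sum>c\<in>removables D. syt_count (D - {c}))"
    using card_syt_max_at[OF assms(1)] unfolding removables_def by simp
  finally show ?thesis .
qed

lemma syt_count_pos:
  assumes "diagram D"
  shows "syt_count D \<ge> 1"
  using assms
proof (induction "card D" arbitrary: D rule: less_induct)
  case less
  show ?case
  proof (cases "D = {}")
    case False
    have "finite D"
      using diagram_finite[OF less.prems] .
    obtain c where "removable D c"
      using exists_removable[OF \<open>finite D\<close> False] by blast
    have "1 \<le> syt_count (D - {c})"
      using less.hyps[OF card_Diff1_less[OF \<open>finite D\<close> removable_in] diagram_remove[OF less.prems]]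
        \<open>removable D c\<close> by blast
    also have "\<dots> \<le> (\<Sum>c\<in>removables D. syt_count (D - {c}))"
      using \<open>removable D c\<close> finite_removables[OF less.prems]
      by (intro member_le_sum) (auto simp: removables_def)
    finally show ?thesis
      using syt_count_branching[OF less.prems False] by simp
  qed (simp add: syt_count_empty)
qed

section \<open>The up-down identity\<close>

lemma syt_count_insert:
  assumes "diagram D" "addable D c"
  shows "syt_count (insert c D) = syt_count D +
    (\<Sum>d\<in>removables D. if c \<notin> successors d then syt_count (insert c (D - {d})) else 0)"
proof -
  have "c \<notin> D"
    using addable_notin[OF assms(2)] .
  have "c \<notin> {d \<in> removables D. c \<notin> successors d}"
    using \<open>c \<notin> D\<close> unfolding removables_def removable_def by auto
  then have "syt_count (insert c D) =
      syt_count D + (\<Sum>d\<in>{d \<in> removables D. c \<notin> successors d}. syt_count (insert c D - {d}))"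
    using syt_count_branching[OF diagram_insert[OF assms]] removables_insert[OF assms]
      finite_removables[OF assms(1)] \<open>c \<notin> D\<close> by simp
  also have "(\<Sum>d\<in>{d \<in> removables D. c \<notin> successors d}. syt_count (insert c D - {d})) =
      (\<Sum>d\<in>{d \<in> removables D. c \<notin> successors d}. syt_count (insert c (D - {d})))"
    using \<open>c \<notin> D\<close> by (intro sum.cong refl) (auto simp: removables_def removable_def insert_Diff_if)
  finally show ?thesis
    using finite_removables[OF assms(1)] by (simp add: sum.inter_filter)
qed

lemma sum_addables_remove:
  assumes "diagram D" "removable D d"
  shows "(\<Sum>c\<in>addables (D - {d}). syt_count (insert c (D - {d}))) = syt_count D +
    (\<Sum>c\<in>addables D. if c \<notin> successors d then syt_count (insert c (D - {d})) else 0)"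
proof -
  have "d \<in> D" "d \<notin> {c \<in> addables D. c \<notin> successors d}"
    using removable_in[OF assms(2)] unfolding addables_def addable_def by auto
  then show ?thesis
    using addables_remove[OF assms] finite_addables[OF assms(1)]
    by (simp add: insert_absorb sum.inter_filter)
qed

theorem up_down_identity:
  assumes "diagram D"
  shows "(\<Sum>c\<in>addables D. syt_count (insert c D)) = (card D + 1) * syt_count D"
  using assms
proof (induction "card D" arbitrary: D rule: less_induct)
  case less
  define X where "X = (\<Sum>c\<in>addables D. \<Sum>d\<in>removables D.
    if c \<notin> successors d then syt_count (insert c (D - {d})) else 0)"
  have up: "(\<Sum>c\<in>addables D. syt_count (insert c D)) = card (addables D) * syt_count D + X"
    using syt_count_insert[OF less.prems] unfolding X_def addables_def by (simp add: sum.distrib)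
  have "card D * syt_count D = (\<Sum>d\<in>removables D. card D * syt_count (D - {d}))"
    using syt_count_branching[OF less.prems] by (cases "D = {}") (simp_all add: sum_distrib_left)
  also have "\<dots> = (\<Sum>d\<in>removables D. \<Sum>c\<in>addables (D - {d}). syt_count (insert c (D - {d})))"
  proof (intro sum.cong refl)
    fix d assume "d \<in> removables D"
    then have "removable D d"
      unfolding removables_def by simp
    have "finite D" "d \<in> D"
      using diagram_finite[OF less.prems] removable_in[OF \<open>removable D d\<close>] by auto
    then have "card D = card (D - {d}) + 1"
      using card_Suc_Diff1 by fastforce
    then show "card D * syt_count (D - {d}) =
        (\<Sum>c\<in>addables (D - {d}). syt_count (insert c (D - {d})))"
      using less.hyps[OF card_Diff1_less diagram_remove[OF less.prems \<open>removable D d\<close>]]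
        \<open>finite D\<close> \<open>d \<in> D\<close> by simp
  qed
  also have "\<dots> = card (removables D) * syt_count D + (\<Sum>d\<in>removables D. \<Sum>c\<in>addables D.
      if c \<notin> successors d then syt_count (insert c (D - {d})) else 0)"
    using sum_addables_remove[OF less.prems] unfolding removables_def by (simp add: sum.distrib)
  also have "(\<Sum>d\<in>removables D. \<Sum>c\<in>addables D.
      if c \<notin> successors d then syt_count (insert c (D - {d})) else 0) = X"
    unfolding X_def by (rule sum.swap)
  finally show ?case
    using up card_addables[OF less.prems] by (simp add: algebra_simps)
qed

lemma bij_betw_remove_cell:
  "bij_betw (\<lambda>(D, d). (D - {d}, d))
    (Sigma (diagrams_of_size (Suc k)) removables) (Sigma (diagrams_of_size k) addables)"
proof (rule bij_betw_byWitness[where f' = "\<lambda>(E, c). (insert c E, c)"])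
  show "\<forall>p\<in>Sigma (diagrams_of_size (Suc k)) removables. (\<lambda>(E, c). (insert c E, c)) ((\<lambda>(D, d). (D - {d}, d)) p) = p"
    by (auto simp: removables_def dest: removable_in)
  show "\<forall>q\<in>Sigma (diagrams_of_size k) addables. (\<lambda>(D, d). (D - {d}, d)) ((\<lambda>(E, c). (insert c E, c)) q) = q"
    by (auto simp: addables_def dest: addable_notin)
  show "(\<lambda>(D, d). (D - {d}, d)) ` Sigma (diagrams_of_size (Suc k)) removables \<subseteq> Sigma (diagrams_of_size k) addables"
    using diagram_remove addable_remove_removable removable_in diagram_finite
    by (fastforce simp: diagrams_of_size_def removables_def addables_def)
  show "(\<lambda>(E, c). (insert c E, c)) ` Sigma (diagrams_of_size k) addables \<subseteq> Sigma (diagrams_of_size (Suc k)) removables"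
    using diagram_insert removable_insert_addable addable_notin diagram_finite
    by (fastforce simp: diagrams_of_size_def removables_def addables_def)
qed

theorem sum_syt_count_squares: "(\<Sum>D\<in>diagrams_of_size k. syt_count D ^ 2) = fact k"
proof (induction k)
  case 0
  show ?case
    by (simp add: diagrams_of_size_0 syt_count_empty)
next
  case (Suc k)
  have finite_removables': "\<forall>D\<in>diagrams_of_size (Suc k). finite (removables D)"
    and finite_addables': "\<forall>D\<in>diagrams_of_size k. finite (addables D)"
    using finite_removables finite_addables by (auto simp: diagrams_of_size_def)
  have "(\<Sum>D\<in>diagrams_of_size (Suc k). syt_count D ^ 2) =
      (\<Sum>D\<in>diagrams_of_size (Suc k). \<Sum>d\<in>removables D. syt_count D * syt_count (D - {d}))"
  proof (intro sum.cong refl)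
    fix D assume "D \<in> diagrams_of_size (Suc k)"
    then have "diagram D" "D \<noteq> {}"
      unfolding diagrams_of_size_def by auto
    then show "syt_count D ^ 2 = (\<Sum>d\<in>removables D. syt_count D * syt_count (D - {d}))"
      using syt_count_branching by (simp add: power2_eq_square sum_distrib_left)
  qed
  also have "\<dots> = (\<Sum>(D, d)\<in>Sigma (diagrams_of_size (Suc k)) removables. syt_count D * syt_count (D - {d}))"
    using finite_diagrams_of_size finite_removables' by (simp add: sum.Sigma)
  also have "\<dots> = (\<Sum>p\<in>Sigma (diagrams_of_size (Suc k)) removables.
      (\<lambda>(E, c). syt_count (insert c E) * syt_count E) ((\<lambda>(D, d). (D - {d}, d)) p))"
    by (intro sum.cong refl) (auto simp: removables_def insert_absorb removable_in)
  also have "\<dots> = (\<Sum>(E, c)\<in>Sigma (diagrams_of_size k) addables. syt_count (insert c E) * syt_count E)"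
    by (rule sum.reindex_bij_betw[OF bij_betw_remove_cell])
  also have "\<dots> = (\<Sum>E\<in>diagrams_of_size k. (\<Sum>c\<in>addables E. syt_count (insert c E)) * syt_count E)"
    using finite_diagrams_of_size finite_addables' by (simp add: sum.Sigma sum_distrib_right)
  also have "\<dots> = (\<Sum>E\<in>diagrams_of_size k. Suc k * syt_count E ^ 2)"
    using up_down_identity by (intro sum.cong refl) (simp add: diagrams_of_size_def power2_eq_square algebra_simps)
  also have "\<dots> = Suc k * fact k"
    by (simp only: sum_distrib_left[symmetric] Suc.IH)
  finally show ?case
    by simp
qed

lemma syt_count_square_le_fact:
  assumes "diagram D"
  shows "syt_count D ^ 2 \<le> fact (card D)"
proof -
  have "D \<in> diagrams_of_size (card D)"
    using assms by (simp add: diagrams_of_size_def)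
  then have "syt_count D ^ 2 \<le> (\<Sum>E\<in>diagrams_of_size (card D). syt_count E ^ 2)"
    by (rule member_le_sum) (simp_all add: finite_diagrams_of_size)
  then show ?thesis
    by (simp only: sum_syt_count_squares)
qed

section \<open>Removing the first row\<close>

lemma inj_below: "inj below"
  unfolding below_def inj_def by auto

lemma range_below: "range below = {c. fst c \<noteq> 0}"
proof
  show "{c. fst c \<noteq> 0} \<subseteq> range below"
  proof
    fix c :: "nat \<times> nat"
    assume "c \<in> {c. fst c \<noteq> 0}"
    then have "c = below (fst c - 1, snd c)"
      by (simp add: below_def)
    then show "c \<in> range below"
      by (rule range_eqI)
  qed
qed (auto simp: below_def)

lemma below_image_lower_rows: "below ` lower_rows D = {c \<in> D. fst c \<noteq> 0}"
  by (auto simp: lower_rows_def image_vimage_eq range_below)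

lemma diagram_lower_rows:
  assumes "diagram D"
  shows "diagram (lower_rows D)"
proof (rule diagramI)
  show "finite (lower_rows D)"
    unfolding lower_rows_def using diagram_finite[OF assms] inj_below by (rule finite_vimageI)
qed (auto simp: lower_rows_def below_def intro: diagram_up[OF assms] diagram_left[OF assms])

lemma row_length_lower_rows: "row_length (lower_rows D) i = row_length D (Suc i)"
  by (simp add: row_length_def lower_rows_def below_def)

lemma row_length_le_card:
  assumes "diagram D"
  shows "row_length D i \<le> card D"
proof -
  have "card ((\<lambda>j. (i, j)) ` {j. (i, j) \<in> D}) \<le> card D"
    using diagram_finite[OF assms] by (intro card_mono) auto
  then show ?thesis
    unfolding row_length_def by (simp add: card_image inj_on_def)
qed

lemma card_eq_first_row_plus_lower_rows:
  assumes "diagram D"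
  shows "card D = row_length D 0 + card (lower_rows D)"
proof -
  let ?first = "(\<lambda>j. (0::nat, j)) ` {j. (0, j) \<in> D}"
  have "D = ?first \<union> below ` lower_rows D"
    unfolding below_image_lower_rows by (auto simp: image_iff)
  then have "card D = card (?first \<union> below ` lower_rows D)"
    by (rule arg_cong)
  also have "\<dots> = card ?first + card (below ` lower_rows D)"
  proof (rule card_Un_disjoint)
    show "finite ?first" "finite (below ` lower_rows D)"
      using diagram_finite[OF assms] by (simp_all add: below_image_lower_rows row_eq_lessThan[OF assms])
    show "?first \<inter> below ` lower_rows D = {}"
      by (auto simp: below_image_lower_rows)
  qed
  also have "card ?first = row_length D 0"
    unfolding row_length_def by (simp add: card_image inj_on_def)
  also have "card (below ` lower_rows D) = card (lower_rows D)"
    using inj_below by (simp add: card_image inj_on_subset)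
  finally show ?thesis .
qed

lemma removable_below_iff: "removable D (below c) \<longleftrightarrow> removable (lower_rows D) c"
  unfolding removable_def lower_rows_def below_def by simp

lemma lower_rows_remove_below: "lower_rows (D - {below c}) = lower_rows D - {c}"
  unfolding lower_rows_def below_def by (auto simp: prod_eq_iff)

lemma lower_rows_remove_first_row: "fst c = 0 \<Longrightarrow> lower_rows (D - {c}) = lower_rows D"
  unfolding lower_rows_def below_def by auto

lemma first_row_removables_subset:
  assumes "diagram D"
  shows "{c \<in> removables D. fst c = 0} \<subseteq> {(0, row_length D 0 - 1)}"
  unfolding removables_eq[OF assms] by auto

lemma syt_count_split_first_row:
  assumes "diagram D" "D \<noteq> {}"
  shows "syt_count D = (\<Sum>c\<in>{c \<in> removables D. fst c = 0}. syt_count (D - {c})) +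
    (\<Sum>c\<in>removables (lower_rows D). syt_count (D - {below c}))"
proof -
  have "{c \<in> removables D. fst c \<noteq> 0} = below ` removables (lower_rows D)"
  proof -
    have "removables (lower_rows D) = below -` removables D"
      by (auto simp: removables_def removable_below_iff)
    then show ?thesis
      by (auto simp: image_vimage_eq range_below)
  qed
  then have "(\<Sum>c\<in>{c \<in> removables D. fst c \<noteq> 0}. syt_count (D - {c})) =
      (\<Sum>c\<in>removables (lower_rows D). syt_count (D - {below c}))"
    by (simp add: sum.reindex inj_on_subset[OF inj_below])
  moreover have "syt_count D = (\<Sum>c\<in>{c \<in> removables D. fst c = 0}. syt_count (D - {c})) +
      (\<Sum>c\<in>{c \<in> removables D. fst c \<noteq> 0}. syt_count (D - {c}))"
    using syt_count_branching[OF assms] sum.Int_Diff[OF finite_removables[OF assms(1)], of _ "{c. fst c = 0}"]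
    by (simp add: Int_def set_diff_eq)
  ultimately show ?thesis
    by simp
qed

section \<open>The two bounds\<close>

theorem syt_count_le_binomial_lower_rows:
  assumes "diagram D"
  shows "syt_count D \<le> (card D choose card (lower_rows D)) * syt_count (lower_rows D)"
  using assms
proof (induction "card D" arbitrary: D rule: less_induct)
  case less
  show ?case
  proof (cases "D = {}")
    case False
    define n k where "n = card D" and "k = card (lower_rows D)"
    have "finite D" "n \<ge> 1"
      using diagram_finite[OF less.prems] False by (auto simp: n_def Suc_le_eq card_gt_0_iff)
    have IH: "syt_count (D - {c}) \<le>
        (n - 1 choose card (lower_rows (D - {c}))) * syt_count (lower_rows (D - {c}))"
      if "removable D c" for c
      using less.hyps[OF card_Diff1_less[OF \<open>finite D\<close> removable_in[OF that]] diagram_remove[OF less.prems that]]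
        removable_in[OF that] \<open>finite D\<close> by (simp add: n_def)
    have first_row: "(\<Sum>c\<in>{c \<in> removables D. fst c = 0}. syt_count (D - {c})) \<le>
        (n - 1 choose k) * syt_count (lower_rows D)"
    proof -
      have "syt_count (D - {c}) \<le> (n - 1 choose k) * syt_count (lower_rows D)"
        if "c \<in> {c \<in> removables D. fst c = 0}" for c
        using IH[of c] that lower_rows_remove_first_row[of c D] by (simp add: removables_def k_def)
      then have "(\<Sum>c\<in>{c \<in> removables D. fst c = 0}. syt_count (D - {c})) \<le>
          of_nat (card {c \<in> removables D. fst c = 0}) * ((n - 1 choose k) * syt_count (lower_rows D))"
        by (rule sum_bounded_above)
      also have "\<dots> \<le> 1 * ((n - 1 choose k) * syt_count (lower_rows D))"
        using card_mono[OF _ first_row_removables_subset[OF less.prems]] by (intro mult_right_mono) simp_all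
      finally show ?thesis
        by simp
    qed
    have "syt_count (D - {below c}) \<le> (n - 1 choose (k - 1)) * syt_count (lower_rows D - {c})"
      if "c \<in> removables (lower_rows D)" for c
    proof -
      have "removable (lower_rows D) c" "c \<in> lower_rows D"
        using that removable_in by (auto simp: removables_def)
      then show ?thesis
        using IH[of "below c"] diagram_finite[OF diagram_lower_rows[OF less.prems]]
        by (simp add: removable_below_iff lower_rows_remove_below k_def)
    qed
    then have lower: "(\<Sum>c\<in>removables (lower_rows D). syt_count (D - {below c})) \<le>
        (n - 1 choose (k - 1)) * (\<Sum>c\<in>removables (lower_rows D). syt_count (lower_rows D - {c}))"
      by (simp add: sum_distrib_left sum_mono)
    have "syt_count D \<le> (n - 1 choose k) * syt_count (lower_rows D) +
        (n - 1 choose (k - 1)) * (\<Sum>c\<in>removables (lower_rows D). syt_count (lower_rows D - {c}))"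
      unfolding syt_count_split_first_row[OF less.prems False] using first_row lower by (rule add_mono)
    show ?thesis
    proof (cases "lower_rows D = {}")
      case True
      then have "k = 0" "removables (lower_rows D) = {}"
        by (simp_all add: k_def removables_def removable_def)
      then show ?thesis
        using \<open>syt_count D \<le> _\<close> by (simp add: n_def k_def)
    next
      case mu_nonempty: False
      then have "k \<ge> 1"
        using diagram_finite[OF diagram_lower_rows[OF less.prems]] by (simp add: k_def Suc_le_eq card_gt_0_iff)
      have "(n - 1 choose k) + (n - 1 choose (k - 1)) = n choose k"
        using \<open>n \<ge> 1\<close> \<open>k \<ge> 1\<close> by (cases n; cases k) simp_all
      then show ?thesis
        using \<open>syt_count D \<le> _\<close> syt_count_branching[OF diagram_lower_rows[OF less.prems] mu_nonempty]
        by (simp add: n_def k_def add_mult_distrib[symmetric])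
    qed
  qed (simp add: lower_rows_def syt_count_empty)
qed

lemma binomial_le_one: "m \<le> k \<Longrightarrow> m choose k \<le> 1"
  by (cases "m = k") (simp_all add: binomial_eq_0)

theorem binomial_first_row_le_syt_count:
  assumes "diagram D"
  shows "row_length D 0 choose card (lower_rows D) \<le> syt_count D"
  using assms
proof (induction "card D" arbitrary: D rule: less_induct)
  case less
  define m k where "m = row_length D 0" and "k = card (lower_rows D)"
  have "finite D"
    using diagram_finite[OF less.prems] .
  have IH: "row_length (D - {c}) 0 choose card (lower_rows (D - {c})) \<le> syt_count (D - {c})"
    if "removable D c" for c
    using less.hyps[OF card_Diff1_less[OF \<open>finite D\<close> removable_in[OF that]] diagram_remove[OF less.prems that]] .
  show ?case
  proof (cases "k = 0")
    case True
    then show ?thesis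
      using syt_count_pos[OF less.prems] by (simp add: k_def)
  next
    case False
    then obtain c where "removable (lower_rows D) c"
      using exists_removable diagram_finite[OF diagram_lower_rows[OF less.prems]] by (fastforce simp: k_def)
    then have "removable D (below c)"
      by (simp add: removable_below_iff)
    then have "(Suc (fst c), snd c) \<in> D"
      using removable_in by (simp add: below_def)
    then have "(0, 0) \<in> D"
      using diagram_down_closed[OF less.prems] by blast
    then have "m \<ge> 1"
      using mem_iff_row_length[OF less.prems] by (simp add: m_def)
    show ?thesis
    proof (cases "row_length D 1 < m")
      case False
      then have "m \<le> k"
        using row_length_le_card[OF diagram_lower_rows[OF less.prems], of 0]
        by (simp add: row_length_lower_rows k_def)
      then show ?thesis
        using binomial_le_one syt_count_pos[OF less.prems] le_trans by (fastforce simp: m_def k_def)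
    next
      case True
      have "(0, m - 1) \<in> removables D"
        unfolding removables_eq[OF less.prems] using True by (intro image_eqI[where x = 0]) (simp_all add: m_def)
      then have "removable D (0, m - 1)"
        by (simp add: removables_def)
      have "m - 1 choose k \<le> syt_count (D - {(0, m - 1)})"
        using IH[OF \<open>removable D (0, m - 1)\<close>] row_length_remove[OF less.prems \<open>removable D (0, m - 1)\<close>]
          lower_rows_remove_first_row[of "(0, m - 1)" D] by (simp add: m_def k_def)
      moreover have "m choose (k - 1) \<le> syt_count (D - {below c})"
        using IH[OF \<open>removable D (below c)\<close>] row_length_remove[OF less.prems \<open>removable D (below c)\<close>]
          lower_rows_remove_below[of D c] removable_in[OF \<open>removable (lower_rows D) c\<close>]
          diagram_finite[OF diagram_lower_rows[OF less.prems]]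
        by (simp add: m_def k_def below_def)
      moreover have "syt_count (D - {(0, m - 1)}) + syt_count (D - {below c}) \<le> syt_count D"
      proof -
        have "syt_count (D - {(0, m - 1)}) \<le> (\<Sum>c\<in>{c \<in> removables D. fst c = 0}. syt_count (D - {c}))"
          using \<open>removable D (0, m - 1)\<close> finite_removables[OF less.prems]
          by (intro member_le_sum[where f = "\<lambda>c. syt_count (D - {c})"]) (simp_all add: removables_def)
        moreover have "syt_count (D - {below c}) \<le> (\<Sum>c\<in>removables (lower_rows D). syt_count (D - {below c}))"
          using \<open>removable (lower_rows D) c\<close> finite_removables[OF diagram_lower_rows[OF less.prems]]
          by (intro member_le_sum[where f = "\<lambda>c. syt_count (D - {below c})"]) (simp_all add: removables_def)
        moreover have "D \<noteq> {}"
          using \<open>(0, 0) \<in> D\<close> by auto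
        ultimately show ?thesis
          using syt_count_split_first_row[OF less.prems] by simp
      qed
      moreover have "m choose k \<le> (m - 1 choose k) + (m choose (k - 1))"
        using \<open>m \<ge> 1\<close> \<open>k \<noteq> 0\<close> binomial_right_mono[of "m - 1" m "k - 1"] by (cases m; cases k) simp_all
      ultimately show ?thesis
        by (simp add: m_def k_def)
    qed
  qed
qed

theorem syt_count_le_pow_div_sqrt_fact:
  assumes "diagram D"
  shows "real (syt_count D) \<le> real (card D) ^ card (lower_rows D) / sqrt (fact (card (lower_rows D)))"
proof -
  define n k where "n = card D" and "k = card (lower_rows D)"
  define s where "s = sqrt (fact k)"
  have "s > 0" "s * s = fact k"
    unfolding s_def by simp_all
  have "real (syt_count (lower_rows D) ^ 2) \<le> real (fact k)"
    using syt_count_square_le_fact[OF diagram_lower_rows[OF assms]] unfolding k_def by (simp only: of_nat_le_iff)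
  then have "real (syt_count (lower_rows D)) ^ 2 \<le> fact k"
    by simp
  then have "real (syt_count (lower_rows D)) \<le> s"
    unfolding s_def by (simp add: real_le_rsqrt)
  have "real (syt_count D) \<le> real ((n choose k) * syt_count (lower_rows D))"
    using syt_count_le_binomial_lower_rows[OF assms] unfolding n_def k_def by (simp only: of_nat_le_iff)
  also have "\<dots> = real (n choose k) * real (syt_count (lower_rows D))"
    by simp
  also have "\<dots> \<le> real (n choose k) * s"
    using \<open>real (syt_count (lower_rows D)) \<le> s\<close> by (simp add: mult_left_mono)
  also have "\<dots> = real ((n choose k) * fact k) / s"
    using \<open>s > 0\<close> \<open>s * s = fact k\<close> by (simp add: field_simps)
  also have "\<dots> \<le> real n ^ k / s"
    using binomial_fact_pow[of n k] \<open>s > 0\<close> by (intro divide_right_mono) (simp_all only: of_nat_power[symmetric] of_nat_le_iff)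
  finally show ?thesis
    by (simp add: n_def k_def s_def)
qed

section \<open>Transposition\<close>

lemma mem_swap_image: "(a, b) \<in> prod.swap ` D \<longleftrightarrow> (b, a) \<in> D"
  by force

lemma diagram_transpose:
  assumes "diagram D"
  shows "diagram (prod.swap ` D)"
proof (rule diagramI)
  show "finite (prod.swap ` D)"
    using diagram_finite[OF assms] by simp
  show "(Suc i, j) \<in> prod.swap ` D \<Longrightarrow> (i, j) \<in> prod.swap ` D" for i j
    unfolding mem_swap_image by (rule diagram_left[OF assms])
  show "(i, Suc j) \<in> prod.swap ` D \<Longrightarrow> (i, j) \<in> prod.swap ` D" for i j
    unfolding mem_swap_image by (rule diagram_up[OF assms])
qed

lemma syt_transpose:
  assumes "syt D T"
  shows "syt (prod.swap ` D) (T \<circ> prod.swap)"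
proof (rule sytI)
  have "bij_betw prod.swap (prod.swap ` D) D"
    by (rule bij_betw_imageI) (auto simp: inj_on_def image_image)
  then show "bij_betw (T \<circ> prod.swap) (prod.swap ` D) {1..card (prod.swap ` D)}"
    using bij_betw_trans syt_bij[OF assms] by (simp add: card_image)
  show "(T \<circ> prod.swap) (i, j) < (T \<circ> prod.swap) (i, Suc j)"
    if "(i, j) \<in> prod.swap ` D" "(i, Suc j) \<in> prod.swap ` D" for i j
    using that unfolding mem_swap_image by (simp add: syt_col[OF assms])
  show "(T \<circ> prod.swap) (i, j) < (T \<circ> prod.swap) (Suc i, j)"
    if "(i, j) \<in> prod.swap ` D" "(Suc i, j) \<in> prod.swap ` D" for i j
    using that unfolding mem_swap_image by (simp add: syt_row[OF assms])
  show "(T \<circ> prod.swap) c = 0" if "c \<notin> prod.swap ` D" for c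
    using that syt_outside[OF assms] by (cases c) (simp add: mem_swap_image)
qed

lemma syt_count_transpose: "syt_count (prod.swap ` D) = syt_count D"
  unfolding syt_count_def
proof (rule bij_betw_same_card[symmetric], rule bij_betw_byWitness[where f' = "\<lambda>T. T \<circ> prod.swap"])
  show "\<forall>T\<in>{T. syt D T}. T \<circ> prod.swap \<circ> prod.swap = T"
    "\<forall>T\<in>{T. syt (prod.swap ` D) T}. T \<circ> prod.swap \<circ> prod.swap = T"
    by (simp_all add: fun_eq_iff)
  show "(\<lambda>T. T \<circ> prod.swap) ` {T. syt D T} \<subseteq> {T. syt (prod.swap ` D) T}"
    using syt_transpose by blast
  have "syt D (T \<circ> prod.swap)" if "syt (prod.swap ` D) T" for T
    using syt_transpose[OF that] by (simp add: image_image)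
  then show "(\<lambda>T. T \<circ> prod.swap) ` {T. syt (prod.swap ` D) T} \<subseteq> {T. syt D T}"
    by blast
qed

section \<open>Young diagrams of partitions\<close>

lemma young_diagram_eq_Sigma: "young_diagram lam = Sigma {..<length lam} (\<lambda>i. {..<lam ! i})"
  unfolding young_diagram_def by auto

lemma diagram_young_diagram:
  assumes "is_partition lam n"
  shows "diagram (young_diagram lam)"
proof (rule diagramI)
  have "sorted (rev lam)"
    using assms unfolding is_partition_def by simp
  then show "(Suc i, j) \<in> young_diagram lam \<Longrightarrow> (i, j) \<in> young_diagram lam" for i j
    unfolding young_diagram_def using sorted_rev_nth_mono[of lam i "Suc i"] by auto
  show "(i, Suc j) \<in> young_diagram lam \<Longrightarrow> (i, j) \<in> young_diagram lam" for i j
    unfolding young_diagram_def by simp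
qed (simp add: young_diagram_eq_Sigma)

lemma card_young_diagram: "card (young_diagram lam) = sum_list lam"
  by (simp add: young_diagram_eq_Sigma sum_list_sum_nth atLeast0LessThan)

lemma num_SYT_eq_syt_count: "num_SYT lam = syt_count (young_diagram lam)"
  unfolding num_SYT_def syt_count_def is_SYT_def syt_def card_young_diagram ..

lemma row_length_young_diagram: "row_length (young_diagram lam) 0 = first_part lam"
  by (cases lam) (simp_all add: row_length_def young_diagram_def first_part_def)

lemma row_length_transpose_young_diagram:
  assumes "is_partition lam n"
  shows "row_length (prod.swap ` young_diagram lam) 0 = length lam"
proof -
  have "0 < lam ! i" if "i < length lam" for i
    using assms that nth_mem unfolding is_partition_def by blast
  then have "{j. (0, j) \<in> prod.swap ` young_diagram lam} = {..<length lam}"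
    unfolding mem_swap_image young_diagram_def by auto
  then show ?thesis
    unfolding row_length_def by simp
qed

lemma partition_diagram_with_longest_first_row:
  assumes "is_partition lam n"
  obtains E where "diagram E" "card E = n" "syt_count E = num_SYT lam"
    "row_length E 0 = max (first_part lam) (length lam)"
proof (cases "length lam \<le> first_part lam")
  case True
  then show ?thesis
    using that[of "young_diagram lam"] assms diagram_young_diagram[OF assms]
    by (simp add: card_young_diagram num_SYT_eq_syt_count row_length_young_diagram is_partition_def)
next
  case False
  then show ?thesis
    using that[of "prod.swap ` young_diagram lam"] assms diagram_transpose[OF diagram_young_diagram[OF assms]]
    by (simp add: card_image card_young_diagram num_SYT_eq_syt_count syt_count_transpose
        row_length_transpose_young_diagram is_partition_def)
qed

theorem mainTheorem3:
  fixes lam :: "nat list" and n k :: nat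
  assumes "is_partition lam n" and "aft lam = k"
  shows "real (num_SYT lam) \<le> real n ^ k / sqrt (real (fact k)) \<and>
         (n - k) choose k \<le> num_SYT lam"
proof -
  obtain E where E: "diagram E" "card E = n" "syt_count E = num_SYT lam"
    and first_row: "row_length E 0 = max (first_part lam) (length lam)"
    using partition_diagram_with_longest_first_row[OF assms(1)] .
  have "sum_list lam = n"
    using assms(1) unfolding is_partition_def by simp
  then have "card (lower_rows E) = k" "row_length E 0 = n - k"
    using card_eq_first_row_plus_lower_rows[OF E(1)] E(2) first_row assms(2) by (simp_all add: aft_def)
  then show ?thesis
    using syt_count_le_pow_div_sqrt_fact[OF E(1)] binomial_first_row_le_syt_count[OF E(1)] E by simp
qed
end
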